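(* Let $\alpha\in(0,1)$ be Diophantine of order $\mu$ for some $\mu\geq2$, i.e. $\alpha$ is irrational and there exists $\varepsilon>0$ such that $|\alpha-p/q|>\varepsilon q^{-\mu}$ for every rational number $p/q$ (with $q\geq1$). Then there is a constant $C>0$ depending on $\alpha$ such that for all integers $n\geq1$, $$\frac{n^2\log n}{2}-n^2\leq e_n(\alpha)\leq\frac{n^2\log n}{2}+9n^2+Cn.$$
   Context: Let $\Delta^2$ be the closed unit bidisk in $\mathbb{C}^2$, $\mathcal{P}_n$ the space of polynomials $P\in\mathbb{C}[z,w]$ of total degree at most $n$, $K=\{(e^z,e^{\alpha z}):\ |z|\leq1\}$, $\|P\|_A=\sup_A|P|$, $E_n(\alpha)=\sup\{\|P\|_{\Delta^2}:\ P\in\mathcal{P}_n,\ \|P\|_K\leq1\}$ and $e_n(\alpha)=\log E_n(\alpha)$. *)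

theory Defs
  imports "HOL-Analysis.Analysis"
begin

text \<open>A polynomial in two complex variables of total degree at most n, given by its
  coefficient family c (only coefficients c i j with i + j \<le> n matter).\<close>
definition poly2 :: "nat \<Rightarrow> (nat \<Rightarrow> nat \<Rightarrow> complex) \<Rightarrow> complex \<Rightarrow> complex \<Rightarrow> complex" where
  "poly2 n c z w = (\<Sum>i\<le>n. \<Sum>j\<le>n - i. c i j * z ^ i * w ^ j)"

text \<open>Sup norm on K = {(e^z, e^(alpha z)) : |z| \<le> 1}.\<close>
definition normK :: "real \<Rightarrow> nat \<Rightarrow> (nat \<Rightarrow> nat \<Rightarrow> complex) \<Rightarrow> real" where
  "normK \<alpha> n c = (SUP z \<in> cball (0::complex) 1.
       cmod (poly2 n c (exp z) (exp (complex_of_real \<alpha> * z))))"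

definition normBidisk :: "nat \<Rightarrow> (nat \<Rightarrow> nat \<Rightarrow> complex) \<Rightarrow> real" where
  "normBidisk n c = (SUP zw \<in> cball (0::complex) 1 \<times> cball (0::complex) 1.
       cmod (poly2 n c (fst zw) (snd zw)))"

definition E_n :: "nat \<Rightarrow> real \<Rightarrow> real" where
  "E_n n \<alpha> = (SUP c \<in> {c. normK \<alpha> n c \<le> 1}. normBidisk n c)"

definition e_n :: "nat \<Rightarrow> real \<Rightarrow> real" where
  "e_n n \<alpha> = ln (E_n n \<alpha>)"

definition diophantine_of_order :: "real \<Rightarrow> real \<Rightarrow> bool" where
  "diophantine_of_order \<alpha> \<mu> \<longleftrightarrow> \<alpha> \<notin> \<rat> \<and>
     (\<exists>\<epsilon>>0. \<forall>p q :: int. q \<ge> 1 \<longrightarrow> \<bar>\<alpha> - of_int p / of_int q\<bar> > \<epsilon> * (of_int q) powr (- \<mu>))"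

end

theory Submission
  imports Defs "HOL-Computational_Algebra.Polynomial" "HOL-Complex_Analysis.Cauchy_Integral_Formula"
begin

text \<open>
  On K a polynomial P(z,w) = sum c_ij z^i w^j of total degree at most n becomes
  the exponential sum f(zeta) = sum_p d_p exp(lambda_p zeta) whose frequencies
  lambda_(i,j) = i + j alpha run over the index set I of the monomials, card I = (n+1)(n+2)/2.

  Upper bound: if |f| <= 1 on the unit disc, Cauchy's inequality bounds every Taylor
  coefficient a_t = sum_p d_p lambda_p^t / t! by 1.  Pairing these coefficients with the
  coefficients of the node polynomial prod_(q ~= p) (z - lambda_q) isolates
  d_p * prod_(q ~= p) (lambda_p - lambda_q), and the Diophantine condition bounds that product
  from below row by row.  This bounds every |d_p|, hence the bidisc norm sum_p |d_p|.

  Lower bound: the choice d_p = k / prod_(q ~= p) (lambda_p - lambda_q) turns the Taylor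
  coefficients of f into divided differences of powers, which are small enough that |f| <= 1,
  while the constant coefficient d_(0,0) is large.
\<close>

section \<open>Divided differences of powers\<close>

definition divdiff_pow :: "('i \<Rightarrow> complex) \<Rightarrow> 'i set \<Rightarrow> nat \<Rightarrow> complex" where
  "divdiff_pow l J m = (\<Sum>p\<in>J. l p ^ m / (\<Prod>q\<in>J-{p}. l p - l q))"

lemma divdiff_pow_Suc:
  assumes "finite J" "inj_on l J" "b \<in> J"
  shows "divdiff_pow l J (Suc m) = l b * divdiff_pow l J m + divdiff_pow l (J - {b}) m"
proof -
  have "divdiff_pow l J (Suc m) - l b * divdiff_pow l J m
      = (\<Sum>p\<in>J. l p ^ m * (l p - l b) / (\<Prod>q\<in>J-{p}. l p - l q))"
    unfolding divdiff_pow_def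
    by (simp add: sum_distrib_left sum_subtractf[symmetric] algebra_simps diff_divide_distrib)
  also have "\<dots> = (\<Sum>p\<in>J-{b}. l p ^ m * (l p - l b) / (\<Prod>q\<in>J-{p}. l p - l q))"
    using assms by (subst sum.remove[of _ b]) auto
  also have "\<dots> = (\<Sum>p\<in>J-{b}. l p ^ m / (\<Prod>q\<in>(J-{b})-{p}. l p - l q))"
  proof (rule sum.cong[OF refl])
    fix p assume p: "p \<in> J - {b}"
    have ne: "l p - l b \<noteq> 0" using assms p by (auto simp: inj_on_def)
    have "(\<Prod>q\<in>J-{p}. l p - l q) = (l p - l b) * (\<Prod>q\<in>(J-{p})-{b}. l p - l q)"
      using assms p by (subst prod.remove[of _ b]) auto
    also have "(J-{p})-{b} = (J-{b})-{p}" by auto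
    finally show "l p ^ m * (l p - l b) / (\<Prod>q\<in>J-{p}. l p - l q)
        = l p ^ m / (\<Prod>q\<in>(J-{b})-{p}. l p - l q)"
      using ne by simp
  qed
  finally show ?thesis unfolding divdiff_pow_def by (simp add: algebra_simps)
qed

lemma divdiff_pow_singleton: "divdiff_pow l {a} m = l a ^ m"
  by (simp add: divdiff_pow_def)

text \<open>Induction on
  the number of nodes: applying the recursion at two different nodes a, b gives
  (l b - l a) * divdiff_pow l J 0 = 0.\<close>
lemma divdiff_pow_zero:
  assumes "finite J" "inj_on l J" "card J \<ge> 2"
  shows "divdiff_pow l J 0 = 0"
  using assms
proof (induction "card J - 2" arbitrary: J)
  case 0
  then have "card J = 2" by simp
  then obtain a b where ab: "J = {a, b}" "a \<noteq> b" by (auto simp: card_Suc_eq numeral_2_eq_2)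
  have ne: "l a - l b \<noteq> 0" using 0 ab by (auto simp: inj_on_def)
  have "divdiff_pow l J 0 = 1 / (l a - l b) + 1 / (l b - l a)"
    unfolding ab(1) divdiff_pow_def using ab(2) by (simp add: insert_Diff_if)
  also have "\<dots> = 0" using ne by (simp add: field_simps)
  finally show ?case .
next
  case (Suc k)
  have "J \<noteq> {}" using Suc.prems(3) by auto
  then obtain a where a: "a \<in> J" by blast
  have "card (J - {a}) \<ge> 1" using a Suc.prems by simp
  then obtain b where "b \<in> J - {a}" by (metis card.empty ex_in_conv not_one_le_zero)
  then have ab: "a \<in> J" "b \<in> J" "a \<noteq> b" using a by auto
  have smaller: "divdiff_pow l (J - {x}) 0 = 0" if "x \<in> J" for x
    using Suc.hyps(1)[of "J - {x}"] Suc.hyps(2) Suc.prems that by (simp add: inj_on_diff)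
  have "divdiff_pow l J (Suc 0) = l b * divdiff_pow l J 0"
    using divdiff_pow_Suc[OF Suc.prems(1,2) ab(2)] smaller[OF ab(2)] by simp
  moreover have "divdiff_pow l J (Suc 0) = l a * divdiff_pow l J 0"
    using divdiff_pow_Suc[OF Suc.prems(1,2) ab(1)] smaller[OF ab(1)] by simp
  moreover have "l a \<noteq> l b" using Suc.prems(2) ab by (auto simp: inj_on_def)
  ultimately show ?case by (metis mult_cancel_right)
qed

text \<open>Size of the divided difference of z^m at card J nodes of modulus at most R:
  it is bounded by the number of monomials of degree m - (card J - 1) times their size.\<close>
lemma divdiff_pow_bound:
  assumes "finite J" "J \<noteq> {}" "inj_on l J" "\<forall>p\<in>J. norm (l p) \<le> R" "0 \<le> R"
  shows "norm (divdiff_pow l J m) \<le> real (m choose (card J - 1)) * R ^ (m - (card J - 1))"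
  using assms(1-4)
proof (induction m arbitrary: J)
  case 0
  show ?case
  proof (cases "card J = 1")
    case True
    then obtain a where "J = {a}" by (auto simp: card_Suc_eq)
    then show ?thesis by (simp add: divdiff_pow_singleton)
  next
    case False
    have "card J \<noteq> 0" using "0.prems" by simp
    with False have "card J \<ge> 2" by linarith
    then have "divdiff_pow l J 0 = 0" using divdiff_pow_zero "0.prems" by blast
    then show ?thesis by simp
  qed
next
  case (Suc m)
  show ?case
  proof (cases "card J = 1")
    case True
    then obtain a where a: "J = {a}" by (auto simp: card_Suc_eq)
    have "norm (l a ^ Suc m) \<le> R ^ Suc m"
      unfolding norm_power using Suc.prems a by (intro power_mono) auto
    then show ?thesis using a by (simp add: divdiff_pow_singleton)
  next
    case False
    have "card J \<noteq> 0" using Suc.prems by simp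
    with False have c2: "card J \<ge> 2" by linarith
    obtain b where b: "b \<in> J" using Suc.prems by auto
    define K where "K = card J - 1"
    have "K \<noteq> 0" using c2 K_def by simp
    then obtain K' where K': "K = Suc K'" using not0_implies_Suc by blast
    have IH1: "norm (divdiff_pow l J m) \<le> real (m choose K) * R ^ (m - K)"
      using Suc.IH[of J] Suc.prems K_def by simp
    have "card (J - {b}) \<ge> 1" using c2 b Suc.prems by simp
    then have "J - {b} \<noteq> {}" by (metis card.empty not_one_le_zero)
    then have "norm (divdiff_pow l (J - {b}) m)
        \<le> real (m choose (card (J - {b}) - 1)) * R ^ (m - (card (J - {b}) - 1))"
      using Suc.prems by (intro Suc.IH) (auto simp: inj_on_diff)
    moreover have "card (J - {b}) - 1 = K'" using b Suc.prems K_def K' by simp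
    ultimately have IH2: "norm (divdiff_pow l (J - {b}) m) \<le> real (m choose K') * R ^ (m - K')"
      by simp
    have "norm (divdiff_pow l J (Suc m))
        \<le> norm (l b) * norm (divdiff_pow l J m) + norm (divdiff_pow l (J - {b}) m)"
      using divdiff_pow_Suc[OF Suc.prems(1) Suc.prems(3) b, of m]
      by (metis norm_mult norm_triangle_ineq)
    also have "\<dots> \<le> R * (real (m choose K) * R ^ (m - K)) + real (m choose K') * R ^ (m - K')"
      using IH1 IH2 Suc.prems(4) b assms(5) by (intro add_mono mult_mono) auto
    also have "\<dots> \<le> real (Suc m choose K) * R ^ (Suc m - K)"
    proof (cases "m \<ge> K")
      case True
      have "m - K' = Suc (m - K)" "Suc m - K = m - K'" using True K' by simp_all
      then have "R * R ^ (m - K) = R ^ (Suc m - K)" "m - K' = Suc m - K" by simp_all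
      moreover have "Suc m choose K = (m choose K') + (m choose K)" using K' by simp
      ultimately show ?thesis by (simp add: algebra_simps) (metis mult.left_commute order_refl)
    next
      case False
      then show ?thesis using K' by (cases "m = K'") (simp_all add: binomial_eq_0)
    qed
    finally show ?thesis unfolding K_def .
  qed
qed

section \<open>Node polynomials\<close>

text \<open>Coefficient bound for a monic polynomial with roots of modulus at most R
  (a consequence of Vieta's formulas, proved by induction over the roots).\<close>
lemma coeff_node_poly_bound:
  fixes l :: "'i \<Rightarrow> complex"
  assumes "finite J" "\<forall>p\<in>J. norm (l p) \<le> R" "0 \<le> R"
  shows "norm (coeff (\<Prod>p\<in>J. [:- l p, 1:]) t) \<le> real (card J choose t) * R ^ (card J - t)"
  using assms(1,2)
proof (induction J arbitrary: t rule: finite_induct)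
  case empty
  then show ?case by (cases t) auto
next
  case (insert y J)
  let ?P = "\<Prod>p\<in>J. [:- l p, 1:]"
  have eq: "(\<Prod>p\<in>insert y J. [:- l p, 1:]) = smult (- l y) ?P + pCons 0 ?P"
    using insert by simp
  have ly: "norm (l y) \<le> R" using insert by simp
  have IH: "\<And>t. norm (coeff ?P t) \<le> real (card J choose t) * R ^ (card J - t)"
    using insert by simp
  show ?case
  proof (cases t)
    case 0
    have "norm (coeff (smult (- l y) ?P + pCons 0 ?P) 0) = norm (l y) * norm (coeff ?P 0)"
      by (simp add: norm_mult)
    also have "\<dots> \<le> R * (real (card J choose 0) * R ^ (card J - 0))"
      using IH[of 0] ly assms(3) by (intro mult_mono) auto
    finally show ?thesis using 0 eq insert by simp
  next
    case (Suc t')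
    have "coeff (smult (- l y) ?P + pCons 0 ?P) (Suc t') = (- l y) * coeff ?P (Suc t') + coeff ?P t'"
      by simp
    then have "norm (coeff (smult (- l y) ?P + pCons 0 ?P) (Suc t'))
        \<le> norm ((- l y) * coeff ?P (Suc t')) + norm (coeff ?P t')"
      by (simp only:) (rule norm_triangle_ineq)
    also have "\<dots> = norm (l y) * norm (coeff ?P (Suc t')) + norm (coeff ?P t')"
      by (simp add: norm_mult)
    also have "\<dots> \<le> R * (real (card J choose Suc t') * R ^ (card J - Suc t'))
        + real (card J choose t') * R ^ (card J - t')"
      using IH[of "Suc t'"] IH[of t'] ly assms(3) by (intro add_mono mult_mono) auto
    also have "\<dots> \<le> real (Suc (card J) choose Suc t') * R ^ (Suc (card J) - Suc t')"
    proof (cases "t' < card J")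
      case True
      have "R * R ^ (card J - Suc t') = R ^ (card J - t')" using True
        by (metis Suc_diff_Suc power_Suc)
      then show ?thesis by (simp add: algebra_simps) (metis mult.left_commute order_refl)
    next
      case False
      then show ?thesis by (simp add: binomial_eq_0)
    qed
    finally show ?thesis using Suc eq insert by simp
  qed
qed

section \<open>Exponential sums\<close>

lemma exp_sum_sums:
  fixes d l :: "'i \<Rightarrow> complex"
  assumes "finite I"
  shows "(\<lambda>s. (\<Sum>p\<in>I. d p * l p ^ s / fact s) * \<zeta> ^ s) sums (\<Sum>p\<in>I. d p * exp (l p * \<zeta>))"
proof -
  have "(\<lambda>s. d p * ((l p * \<zeta>) ^ s /\<^sub>R fact s)) sums (d p * exp (l p * \<zeta>))" for p
    by (intro sums_mult exp_converges)
  then have "(\<lambda>s. \<Sum>p\<in>I. d p * ((l p * \<zeta>) ^ s /\<^sub>R fact s)) sums (\<Sum>p\<in>I. d p * exp (l p * \<zeta>))"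
    by (rule sums_sum)
  moreover have "(\<Sum>p\<in>I. d p * ((l p * \<zeta>) ^ s /\<^sub>R fact s))
      = (\<Sum>p\<in>I. d p * l p ^ s / fact s) * \<zeta> ^ s" for s
    by (simp add: sum_distrib_left sum_distrib_right power_mult_distrib scaleR_conv_of_real
        divide_inverse mult_ac)
  ultimately show ?thesis by simp
qed

lemma exp_sum_higher_deriv:
  fixes d l :: "'i \<Rightarrow> complex"
  shows "(deriv ^^ m) (\<lambda>\<zeta>. \<Sum>p\<in>I. d p * exp (l p * \<zeta>))
       = (\<lambda>\<zeta>. \<Sum>p\<in>I. d p * l p ^ m * exp (l p * \<zeta>))"
proof (induction m)
  case 0
  show ?case by simp
next
  case (Suc m)
  have "((\<lambda>\<zeta>. \<Sum>p\<in>I. d p * l p ^ m * exp (l p * \<zeta>)) has_field_derivative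
          (\<Sum>p\<in>I. d p * l p ^ Suc m * exp (l p * \<zeta>))) (at \<zeta>)" for \<zeta>
    by (auto intro!: derivative_eq_intros simp: algebra_simps)
  then have "deriv (\<lambda>\<zeta>. \<Sum>p\<in>I. d p * l p ^ m * exp (l p * \<zeta>))
      = (\<lambda>\<zeta>. \<Sum>p\<in>I. d p * l p ^ Suc m * exp (l p * \<zeta>))"
    by (intro ext DERIV_imp_deriv)
  then show ?case using Suc.IH by simp
qed

lemma exp_sum_coeff_bound:
  fixes d l :: "'i \<Rightarrow> complex"
  assumes bound: "\<And>\<zeta>. norm \<zeta> = 1 \<Longrightarrow> norm (\<Sum>p\<in>I. d p * exp (l p * \<zeta>)) \<le> B"
  shows "norm (\<Sum>p\<in>I. d p * l p ^ m / fact m) \<le> B"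
proof -
  let ?f = "\<lambda>\<zeta>. \<Sum>p\<in>I. d p * exp (l p * \<zeta>)"
  have "norm ((deriv ^^ m) ?f 0) \<le> fact m * B / 1 ^ m"
    by (rule Cauchy_inequality) (auto intro!: holomorphic_intros continuous_intros bound)
  moreover have "(deriv ^^ m) ?f 0 = (\<Sum>p\<in>I. d p * l p ^ m)"
    by (simp add: exp_sum_higher_deriv)
  ultimately show ?thesis
    by (simp add: sum_divide_distrib[symmetric] norm_divide field_simps)
qed

lemma exp_sum_bound_by_coeffs:
  fixes d l :: "'i \<Rightarrow> complex"
  assumes "finite I" "norm \<zeta> \<le> 1"
    and coeff: "\<And>s. norm (\<Sum>p\<in>I. d p * l p ^ s / fact s) \<le> b s"
    and partial: "\<And>K. (\<Sum>s<K. b s) \<le> B"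
  shows "norm (\<Sum>p\<in>I. d p * exp (l p * \<zeta>)) \<le> B"
proof -
  let ?a = "\<lambda>s. (\<Sum>p\<in>I. d p * l p ^ s / fact s) * \<zeta> ^ s"
  have lim: "(\<lambda>K. norm (\<Sum>s<K. ?a s)) \<longlonglongrightarrow> norm (\<Sum>p\<in>I. d p * exp (l p * \<zeta>))"
    using exp_sum_sums[OF assms(1)] unfolding sums_def by (rule tendsto_norm)
  have partial_sum: "norm (\<Sum>s<K. ?a s) \<le> B" for K
  proof -
    have "norm (\<Sum>s<K. ?a s) \<le> (\<Sum>s<K. norm (?a s))" by (rule norm_sum)
    also have "\<dots> \<le> (\<Sum>s<K. b s)"
    proof (rule sum_mono)
      fix s
      have "norm (\<zeta> ^ s) \<le> 1" using assms(2) by (simp add: norm_power power_le_one)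
      then show "norm (?a s) \<le> b s"
        unfolding norm_mult using coeff[of s] by (metis mult_left_le norm_ge_zero order_trans)
    qed
    finally show ?thesis using partial[of K] by linarith
  qed
  show ?thesis by (rule LIMSEQ_le_const2[OF lim]) (use partial_sum in blast)
qed

section \<open>Partial sums of the exponential series\<close>

lemma exp_partial_sum_le:
  fixes x :: real
  assumes "0 \<le> x"
  shows "(\<Sum>s<K. x ^ s / fact s) \<le> exp x"
  using assms summable_exp_generic[of x]
  by (auto simp: exp_def divide_inverse ac_simps intro!: sum_le_suminf)

lemma pow_div_fact_le_exp:
  fixes x :: real
  assumes "0 \<le> x"
  shows "x ^ k / fact k \<le> exp x"
proof -
  have "x ^ k / fact k \<le> (\<Sum>s<Suc k. x ^ s / fact s)"
    using assms by (intro member_le_sum) auto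
  also have "\<dots> \<le> exp x" by (rule exp_partial_sum_le[OF assms])
  finally show ?thesis .
qed

text \<open>The series sum_s (s choose N) N! x^(s-N) / s! is the exponential series shifted by N;
  it majorises the Taylor coefficients of the exponential sum built in the lower bound.\<close>
lemma shifted_exp_partial_sum_le:
  fixes x :: real
  assumes "0 \<le> x"
  shows "(\<Sum>s<K. fact N * real (s choose N) * x ^ (s - N) / fact s) \<le> exp x"
proof -
  have summand: "fact N * real (s choose N) * x ^ (s - N) / fact s
      = (if N \<le> s then x ^ (s - N) / fact (s - N) else 0)" for s
  proof (cases "N \<le> s")
    case True
    have "fact N * fact (s - N) * real (s choose N) = (fact s :: real)"
      using binomial_fact_lemma[OF True] by (metis of_nat_fact of_nat_mult)
    then show ?thesis using True by (simp add: field_simps)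
  qed (simp add: binomial_eq_0)
  have "(\<Sum>s<K. fact N * real (s choose N) * x ^ (s - N) / fact s)
      = (\<Sum>s\<in>{N..<K}. x ^ (s - N) / fact (s - N))"
    unfolding summand by (rule sum.mono_neutral_cong_right) auto
  also have "\<dots> = (\<Sum>u<K - N. x ^ u / fact u)"
  proof (rule sum.reindex_bij_witness[of _ "\<lambda>u. u + N" "\<lambda>s. s - N"])
  qed auto
  also have "\<dots> \<le> exp x" by (rule exp_partial_sum_le[OF assms])
  finally show ?thesis .
qed

section \<open>Isolating one coefficient of an exponential sum\<close>

text \<open>If all Taylor coefficients sum_p d_p (l p)^t / t! have modulus at most 1, then pairing them
  with the coefficients of the node polynomial Q(z) = prod_(q ~= p0) (z - l q) gives
  sum_p d_p Q(l p) = d_p0 Q(l p0), which is therefore bounded in terms of card I and R.\<close>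
lemma exp_sum_isolate_coeff:
  fixes d l :: "'i \<Rightarrow> complex"
  assumes I: "finite I" and p0: "p0 \<in> I" and lR: "\<forall>p\<in>I. norm (l p) \<le> R" and R0: "0 \<le> R"
    and coeffs: "\<And>t. norm (\<Sum>p\<in>I. d p * l p ^ t / fact t) \<le> 1"
  shows "norm (d p0 * (\<Prod>q\<in>I-{p0}. l p0 - l q)) \<le> real (card I) * fact (card I - 1) * exp R"
proof -
  define Q where "Q = (\<Prod>q\<in>I-{p0}. [:- l q, 1:])"
  define N where "N = card (I - {p0})"
  have NI: "N = card I - 1" using I p0 by (simp add: N_def)
  have IN: "card I = Suc N" using NI I p0 by (metis card_Diff1_less card_Suc_Diff1 N_def)
  have polyQ: "poly Q x = (\<Prod>q\<in>I-{p0}. x - l q)" for x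
    by (simp add: Q_def poly_prod)
  have degQ: "degree Q \<le> N"
    using degree_prod_sum_le[of "I - {p0}" "\<lambda>q. [:- l q, 1:]"] I by (simp add: Q_def N_def)
  have polyQ_sum: "poly Q x = (\<Sum>t\<le>N. coeff Q t * x ^ t)" for x
    unfolding poly_altdef using degQ by (intro sum.mono_neutral_left) (auto intro: le_degree)
  have "(\<Sum>p\<in>I-{p0}. d p * poly Q (l p)) = 0"
    using I by (intro sum.neutral) (auto simp: polyQ)
  then have "d p0 * (\<Prod>q\<in>I-{p0}. l p0 - l q) = (\<Sum>p\<in>I. d p * poly Q (l p))"
    using I p0 by (simp add: sum.remove polyQ)
  also have "\<dots> = (\<Sum>t\<le>N. coeff Q t * (\<Sum>p\<in>I. d p * l p ^ t / fact t) * fact t)"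
    by (simp add: polyQ_sum sum_distrib_left sum_distrib_right sum.swap[of _ I] algebra_simps)
  finally have isolated: "d p0 * (\<Prod>q\<in>I-{p0}. l p0 - l q) = \<dots>" .
  have "norm (coeff Q t * (\<Sum>p\<in>I. d p * l p ^ t / fact t) * fact t) \<le> fact N * exp R"
    if t: "t \<le> N" for t
  proof -
    have cb: "norm (coeff Q t) \<le> real (N choose t) * R ^ (N - t)"
      unfolding Q_def N_def by (rule coeff_node_poly_bound) (use I lR R0 in auto)
    have "norm (coeff Q t * (\<Sum>p\<in>I. d p * l p ^ t / fact t) * fact t)
        \<le> (real (N choose t) * R ^ (N - t)) * 1 * fact t"
      unfolding norm_mult using cb coeffs[of t] R0 by (intro mult_mono) auto
    also have "\<dots> = fact N * (R ^ (N - t) / fact (N - t))"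
    proof -
      have "fact t * fact (N - t) * real (N choose t) = (fact N :: real)"
        using binomial_fact_lemma[OF t] by (metis of_nat_fact of_nat_mult)
      then show ?thesis by (simp add: field_simps)
    qed
    also have "\<dots> \<le> fact N * exp R"
      using pow_div_fact_le_exp[OF R0] by (intro mult_left_mono) auto
    finally show ?thesis .
  qed
  then have "norm (\<Sum>t\<le>N. coeff Q t * (\<Sum>p\<in>I. d p * l p ^ t / fact t) * fact t)
      \<le> (\<Sum>t\<le>N. fact N * exp R)"
    by (intro order_trans[OF norm_sum sum_mono]) auto
  also have "\<dots> = real (card I) * fact (card I - 1) * exp R" using IN NI by simp
  finally show ?thesis using isolated by simp
qed

section \<open>The frequency lattice\<close>

text \<open>Exponent pairs (i, j) of the monomials of total degree at most n, and the frequency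
  i + j alpha of the exponential exp(zeta)^i exp(alpha zeta)^j.\<close>
definition freqs :: "nat \<Rightarrow> (nat \<times> nat) set" where
  "freqs n = Sigma {..n} (\<lambda>i. {..n - i})"

definition freq :: "real \<Rightarrow> nat \<times> nat \<Rightarrow> complex" where
  "freq \<alpha> p = complex_of_real (real (fst p) + real (snd p) * \<alpha>)"

lemma finite_freqs [simp]: "finite (freqs n)"
  by (simp add: freqs_def)

lemma mem_freqs: "p \<in> freqs n \<longleftrightarrow> fst p + snd p \<le> n"
  by (cases p) (auto simp: freqs_def)

lemma poly2_freqs: "poly2 n c z w = (\<Sum>p\<in>freqs n. c (fst p) (snd p) * z ^ fst p * w ^ snd p)"
  unfolding poly2_def freqs_def by (subst sum.Sigma) (auto simp: split_def)

lemma poly2_exp_sum: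
  "poly2 n c (exp \<zeta>) (exp (complex_of_real \<alpha> * \<zeta>))
     = (\<Sum>p\<in>freqs n. c (fst p) (snd p) * exp (freq \<alpha> p * \<zeta>))"
  unfolding poly2_freqs
proof (rule sum.cong[OF refl])
  fix p :: "nat \<times> nat"
  have "exp \<zeta> ^ fst p * exp (complex_of_real \<alpha> * \<zeta>) ^ snd p
      = exp (of_nat (fst p) * \<zeta>) * exp (of_nat (snd p) * (complex_of_real \<alpha> * \<zeta>))"
    by (simp add: exp_of_nat_mult)
  also have "\<dots> = exp (freq \<alpha> p * \<zeta>)"
    by (simp add: freq_def exp_add[symmetric] algebra_simps)
  finally show "c (fst p) (snd p) * exp \<zeta> ^ fst p * exp (complex_of_real \<alpha> * \<zeta>) ^ snd p
      = c (fst p) (snd p) * exp (freq \<alpha> p * \<zeta>)" by (simp add: mult.assoc)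
qed

lemma card_freqs: "2 * card (freqs n) = (n + 1) * (n + 2)"
proof -
  have "card (freqs n) = (\<Sum>i\<le>n. Suc (n - i))"
    unfolding freqs_def by (subst card_SigmaI) auto
  moreover have "2 * (\<Sum>i\<le>n. Suc (n - i)) = (n + 1) * (n + 2)"
  proof (induction n)
    case (Suc n)
    have "(\<Sum>i\<le>Suc n. Suc (Suc n - i)) = (\<Sum>i\<le>n. Suc (Suc n - i)) + 1" by simp
    also have "(\<Sum>i\<le>n. Suc (Suc n - i)) = (\<Sum>i\<le>n. Suc (n - i) + 1)"
      by (rule sum.cong) (auto simp: Suc_diff_le)
    also have "\<dots> = (\<Sum>i\<le>n. Suc (n - i)) + (n + 1)"
      by (subst sum.distrib) simp
    finally show ?case using Suc by simp
  qed simp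
  ultimately show ?thesis by simp
qed

lemma norm_freq:
  assumes "0 < \<alpha>" "\<alpha> < 1" "p \<in> freqs n"
  shows "norm (freq \<alpha> p) \<le> real n"
proof -
  have "real (snd p) * \<alpha> \<le> real (snd p)" using assms by (simp add: mult_left_le)
  moreover have "real (fst p) + real (snd p) \<le> real n"
    using assms(3) mem_freqs by (metis of_nat_add of_nat_le_iff)
  moreover have "0 \<le> real (fst p) + real (snd p) * \<alpha>" using assms by simp
  ultimately show ?thesis using assms unfolding freq_def norm_of_real by linarith
qed

lemma norm_freq_diff:
  "norm (freq \<alpha> p - freq \<alpha> q)
     = \<bar>(real (fst p) - real (fst q)) + (real (snd p) - real (snd q)) * \<alpha>\<bar>"
proof -
  have "freq \<alpha> p - freq \<alpha> q
      = complex_of_real ((real (fst p) - real (fst q)) + (real (snd p) - real (snd q)) * \<alpha>)"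
    by (simp add: freq_def algebra_simps)
  then show ?thesis by (simp only: norm_of_real)
qed

section \<open>Diophantine separation of the frequencies\<close>

lemma diophantine_linear_form_bound:
  assumes "diophantine_of_order \<alpha> \<mu>" "\<mu> \<ge> 1"
  obtains e where "0 < e" "e \<le> 1"
    "\<And>n p q. 1 \<le> \<bar>q\<bar> \<Longrightarrow> \<bar>q\<bar> \<le> int n \<Longrightarrow>
        \<bar>real_of_int p + real_of_int q * \<alpha>\<bar> \<ge> e * real n powr (1 - \<mu>)"
proof -
  obtain \<epsilon> where \<epsilon>: "\<epsilon> > 0"
    "\<And>p q :: int. q \<ge> 1 \<Longrightarrow> \<bar>\<alpha> - of_int p / of_int q\<bar> > \<epsilon> * (of_int q) powr (- \<mu>)"
    using assms(1) unfolding diophantine_of_order_def by blast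
  define e where "e = min \<epsilon> 1"
  have pos_q: "\<bar>real_of_int p + real_of_int q * \<alpha>\<bar> \<ge> e * real n powr (1 - \<mu>)"
    if q: "q \<ge> 1" "q \<le> int n" for n p q
  proof -
    have qr: "real_of_int q \<ge> 1" using q by simp
    have "\<bar>real_of_int p + real_of_int q * \<alpha>\<bar> = real_of_int q * \<bar>\<alpha> - of_int (-p) / of_int q\<bar>"
    proof -
      have "real_of_int p + real_of_int q * \<alpha> = real_of_int q * (\<alpha> - of_int (-p) / of_int q)"
        using qr by (simp add: field_simps)
      then show ?thesis using qr by (simp add: abs_mult)
    qed
    also have "\<dots> \<ge> real_of_int q * (\<epsilon> * (of_int q) powr (- \<mu>))"
      using \<epsilon>(2)[of q "-p"] q qr by (intro mult_left_mono) auto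
    also have "real_of_int q * (\<epsilon> * (of_int q) powr (- \<mu>)) = \<epsilon> * (of_int q) powr (1 - \<mu>)"
      using qr powr_mult_base[of "real_of_int q" "- \<mu>"] by (simp add: algebra_simps)
    also have "\<dots> \<ge> e * real n powr (1 - \<mu>)"
    proof (rule mult_mono)
      show "(of_int q) powr (1 - \<mu>) \<ge> real n powr (1 - \<mu>)"
        using q assms(2) by (intro powr_mono2') auto
    qed (use \<epsilon>(1) in \<open>auto simp: e_def\<close>)
    finally show ?thesis .
  qed
  show ?thesis
  proof (rule that)
    show "0 < e" "e \<le> 1" using \<epsilon> by (auto simp: e_def)
    fix n p q assume q: "1 \<le> \<bar>q\<bar>" "\<bar>q\<bar> \<le> int n"
    show "\<bar>real_of_int p + real_of_int q * \<alpha>\<bar> \<ge> e * real n powr (1 - \<mu>)"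
    proof (cases "q \<ge> 1")
      case True
      then show ?thesis using pos_q q by simp
    next
      case False
      then have "\<bar>real_of_int (-p) + real_of_int (-q) * \<alpha>\<bar> \<ge> e * real n powr (1 - \<mu>)"
        using q by (intro pos_q) auto
      then show ?thesis by (simp add: abs_minus_commute)
    qed
  qed
qed

text \<open>The separation hypothesis used below: distinct rows of the lattice are delta apart.\<close>
definition row_separated :: "real \<Rightarrow> nat \<Rightarrow> real \<Rightarrow> bool" where
  "row_separated \<alpha> n \<delta> \<longleftrightarrow> (\<forall>p q::int. 1 \<le> \<bar>q\<bar> \<longrightarrow> \<bar>q\<bar> \<le> int n \<longrightarrow>
      \<bar>real_of_int p + real_of_int q * \<alpha>\<bar> \<ge> \<delta>)"

lemma inj_on_freq:
  assumes sep: "row_separated \<alpha> n \<delta>" and "0 < \<delta>"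
  shows "inj_on (freq \<alpha>) (freqs n)"
proof (rule inj_onI)
  fix p q assume p: "p \<in> freqs n" and q: "q \<in> freqs n" and eq: "freq \<alpha> p = freq \<alpha> q"
  have zero: "\<bar>(real (fst p) - real (fst q)) + (real (snd p) - real (snd q)) * \<alpha>\<bar> = 0"
    using norm_freq_diff[of \<alpha> p q] eq by simp
  show "p = q"
  proof (cases "snd p = snd q")
    case True
    then show ?thesis using zero by (simp add: prod_eq_iff)
  next
    case False
    have "1 \<le> \<bar>int (snd p) - int (snd q)\<bar>" "\<bar>int (snd p) - int (snd q)\<bar> \<le> int n"
      using False p q by (auto simp: mem_freqs)
    then have "\<bar>real_of_int (int (fst p) - int (fst q))
        + real_of_int (int (snd p) - int (snd q)) * \<alpha>\<bar> \<ge> \<delta>"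
      using sep unfolding row_separated_def by blast
    then show ?thesis using zero assms(2) by simp
  qed
qed

lemma prod_dist_nat:
  assumes "i0 \<le> L"
  shows "(\<Prod>i\<in>{..L}-{i0}. \<bar>real i - real i0\<bar>) = fact i0 * fact (L - i0)"
  using assms
proof (induction L rule: dec_induct)
  case base
  have "(\<Prod>i\<in>{..i0}-{i0}. \<bar>real i - real i0\<bar>) = (\<Prod>i=0..<i0. real (i0 - i))"
    by (intro prod.cong) (auto simp: of_nat_diff)
  also have "\<dots> = fact i0" by (simp only: fact_prod_rev of_nat_prod)
  finally show ?case by simp
next
  case (step L)
  have "{..Suc L} - {i0} = insert (Suc L) ({..L} - {i0})" using step by auto
  then have "(\<Prod>i\<in>{..Suc L}-{i0}. \<bar>real i - real i0\<bar>)
      = real (Suc L - i0) * (\<Prod>i\<in>{..L}-{i0}. \<bar>real i - real i0\<bar>)"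
    using step by (simp add: of_nat_diff)
  also have "\<dots> = fact i0 * fact (Suc L - i0)"
    using step by (simp add: Suc_diff_le algebra_simps)
  finally show ?case .
qed

lemma row_prod_lower:
  fixes g :: "nat \<Rightarrow> real"
  assumes "i0 \<le> L" "\<And>i. i \<le> L \<Longrightarrow> i \<noteq> i0 \<Longrightarrow> g i \<ge> \<bar>real i - real i0\<bar> / 2"
  shows "(\<Prod>i\<in>{..L}-{i0}. g i) \<ge> fact L / 4 ^ L"
proof -
  have card: "card ({..L} - {i0}) = L" using assms by simp
  have "fact L = (fact i0 * fact (L - i0) * real (L choose i0) :: real)"
    using binomial_fact_lemma[OF assms(1)] by (metis of_nat_fact of_nat_mult)
  also have "\<dots> \<le> fact i0 * fact (L - i0) * 2 ^ L"
    using binomial_le_pow2[of L i0] by (intro mult_left_mono) (auto simp flip: of_nat_power)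
  finally have "fact L / 4 ^ L \<le> (fact i0 * fact (L - i0) * 2 ^ L / 4 ^ L :: real)"
    by (intro divide_right_mono) auto
  also have "\<dots> = (\<Prod>i\<in>{..L}-{i0}. \<bar>real i - real i0\<bar> / 2)"
    using card by (simp add: prod_dividef prod_dist_nat[OF assms(1)] field_simps
        power_mult_distrib flip: power_mult_distrib)
  also have "\<dots> \<le> (\<Prod>i\<in>{..L}-{i0}. g i)"
    using assms by (intro prod_mono) auto
  finally show ?thesis .
qed

text \<open>Within a row the frequencies are spaced like the integers; if j is not the row of p0,
  the closest one is at distance at least delta by separation, and the remaining ones are
  at least half as far as their indices from it.\<close>
lemma row_dist_prod_lower:
  assumes d0: "0 < \<delta>" "\<delta> \<le> 1" and sep: "row_separated \<alpha> n \<delta>"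
    and p0: "p0 \<in> freqs n" and j: "j \<le> n"
  shows "(\<Prod>i\<in>{..n-j} - (if j = snd p0 then {fst p0} else {}). norm (freq \<alpha> p0 - freq \<alpha> (i, j)))
           \<ge> \<delta> * (fact (n - j) / 4 ^ (n - j))"
proof -
  define G where "G i = norm (freq \<alpha> p0 - freq \<alpha> (i, j))" for i
  have tri: "\<bar>real i - real i'\<bar> \<le> G i + G i'" for i i'
  proof -
    have "\<bar>real i - real i'\<bar> = norm ((freq \<alpha> p0 - freq \<alpha> (i', j)) - (freq \<alpha> p0 - freq \<alpha> (i, j)))"
      using norm_freq_diff[of \<alpha> "(i, j)" "(i', j)"] by (simp add: algebra_simps)
    also have "\<dots> \<le> G i' + G i" unfolding G_def by (rule norm_triangle_ineq4)
    finally show ?thesis by simp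
  qed
  have row: "fact (n - j) / 4 ^ (n - j) \<le> (\<Prod>i\<in>{..n-j} - {i0}. G i)"
    if "i0 \<le> n - j" "\<And>i. i \<le> n - j \<Longrightarrow> G i0 \<le> G i" for i0
  proof (rule row_prod_lower[OF that(1)])
    fix i assume "i \<le> n - j" "i \<noteq> i0"
    then show "\<bar>real i - real i0\<bar> / 2 \<le> G i" using tri[of i i0] that(2)[of i] by simp
  qed
  show ?thesis
  proof (cases "j = snd p0")
    case True
    have "G (fst p0) = 0" using True by (simp add: G_def)
    then have "fact (n - j) / 4 ^ (n - j) \<le> (\<Prod>i\<in>{..n-j} - {fst p0}. G i)"
      using p0 True by (intro row) (auto simp: mem_freqs G_def)
    moreover have "\<delta> * (fact (n - j) / 4 ^ (n - j)) \<le> fact (n - j) / 4 ^ (n - j)"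
      using d0 by (intro mult_left_le_one_le) auto
    ultimately show ?thesis using True by (simp add: G_def)
  next
    case False
    define S where "S = {..n-j}"
    have S: "finite S" "S \<noteq> {}" by (auto simp: S_def)
    have "Min (G ` S) \<in> G ` S" using S by (intro Min_in) auto
    then obtain i0 where i0: "i0 \<in> S" "G i0 = Min (G ` S)" by auto
    have i0_min: "G i0 \<le> G i" if "i \<in> S" for i
      using i0(2) S that by simp
    have "G i0 = \<bar>real_of_int (int (fst p0) - int i0) + real_of_int (int (snd p0) - int j) * \<alpha>\<bar>"
      unfolding G_def norm_freq_diff by simp
    moreover have "1 \<le> \<bar>int (snd p0) - int j\<bar>" "\<bar>int (snd p0) - int j\<bar> \<le> int n"
      using False p0 j by (auto simp: mem_freqs)
    ultimately have Gi0: "G i0 \<ge> \<delta>"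
      using sep unfolding row_separated_def by (metis (no_types))
    have "(\<Prod>i\<in>S - {i0}. G i) \<ge> fact (n - j) / 4 ^ (n - j)"
      using i0 i0_min unfolding S_def by (intro row) auto
    then have "\<delta> * (fact (n - j) / 4 ^ (n - j)) \<le> G i0 * (\<Prod>i\<in>S - {i0}. G i)"
      using Gi0 d0 by (intro mult_mono) auto
    also have "\<dots> = (\<Prod>i\<in>S. G i)" using S i0 by (simp add: prod.remove)
    finally show ?thesis using False by (simp add: G_def S_def)
  qed
qed

text \<open>The resulting lower bound for prod_(q ~= p0) |freq p0 - freq q| (product over rows).\<close>
definition sep_bound :: "real \<Rightarrow> nat \<Rightarrow> real" where
  "sep_bound \<delta> n = (\<Prod>j\<le>n. \<delta> * (fact (n - j) / 4 ^ (n - j)))"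

lemma sep_bound_pos: "0 < \<delta> \<Longrightarrow> 0 < sep_bound \<delta> n"
  by (simp add: sep_bound_def prod_pos)

lemma freq_dist_prod_lower:
  assumes d0: "0 < \<delta>" "\<delta> \<le> 1" and sep: "row_separated \<alpha> n \<delta>" and p0: "p0 \<in> freqs n"
  shows "(\<Prod>q\<in>freqs n - {p0}. norm (freq \<alpha> p0 - freq \<alpha> q)) \<ge> sep_bound \<delta> n"
proof -
  define R where "R j = {..n-j} - (if j = snd p0 then {fst p0} else {})" for j
  define F where "F q = norm (freq \<alpha> p0 - freq \<alpha> q)" for q
  have rows: "freqs n - {p0} = (\<lambda>(j,i). (i,j)) ` (SIGMA j:{..n}. R j)"
    by (auto simp: mem_freqs R_def image_iff split: if_splits)
  have inj: "inj_on (\<lambda>(j,i). (i::nat, j::nat)) (SIGMA j:{..n}. R j)"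
    by (auto simp: inj_on_def)
  have "(\<Prod>q\<in>freqs n - {p0}. F q) = (\<Prod>j\<le>n. \<Prod>i\<in>R j. F (i, j))"
    unfolding rows prod.reindex[OF inj] by (subst prod.Sigma) (auto simp: R_def split_def)
  also have "\<dots> \<ge> sep_bound \<delta> n"
    unfolding sep_bound_def using row_dist_prod_lower[OF d0 sep p0] d0
    by (intro prod_mono) (auto simp: R_def F_def)
  finally show ?thesis by (simp add: F_def)
qed

section \<open>Bounds for admissible polynomials\<close>

text \<open>The values of P on K for |zeta| <= 1 are bounded by normK (the supremum is finite since
  the coefficients are bounded).\<close>
lemma norm_le_normK:
  assumes "0 < \<alpha>" "\<alpha> < 1" "norm \<zeta> \<le> 1"
  shows "norm (poly2 n c (exp \<zeta>) (exp (complex_of_real \<alpha> * \<zeta>))) \<le> normK \<alpha> n c"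
proof -
  have "norm (poly2 n c (exp z) (exp (complex_of_real \<alpha> * z)))
      \<le> (\<Sum>p\<in>freqs n. norm (c (fst p) (snd p))) * exp (real n)" if z: "z \<in> cball 0 1" for z
  proof -
    have "norm (poly2 n c (exp z) (exp (complex_of_real \<alpha> * z)))
        \<le> (\<Sum>p\<in>freqs n. norm (c (fst p) (snd p) * exp (freq \<alpha> p * z)))"
      unfolding poly2_exp_sum by (rule norm_sum)
    also have "\<dots> \<le> (\<Sum>p\<in>freqs n. norm (c (fst p) (snd p)) * exp (real n))"
    proof (rule sum_mono)
      fix p assume p: "p \<in> freqs n"
      have "norm (freq \<alpha> p * z) \<le> real n * 1"
        unfolding norm_mult using norm_freq[OF assms(1,2) p] z by (intro mult_mono) auto
      then have "norm (exp (freq \<alpha> p * z)) \<le> exp (real n)"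
        using norm_exp order_trans by fastforce
      then show "norm (c (fst p) (snd p) * exp (freq \<alpha> p * z))
          \<le> norm (c (fst p) (snd p)) * exp (real n)"
        unfolding norm_mult by (rule mult_left_mono) simp
    qed
    finally show ?thesis by (simp add: sum_distrib_right)
  qed
  then show ?thesis unfolding normK_def
    by (intro cSUP_upper bdd_aboveI2) (use assms(3) in auto)
qed

lemma norm_poly2_bidisk_le:
  assumes "norm z \<le> 1" "norm w \<le> 1"
  shows "norm (poly2 n c z w) \<le> (\<Sum>p\<in>freqs n. norm (c (fst p) (snd p)))"
  unfolding poly2_freqs
proof (rule order_trans[OF norm_sum sum_mono])
  fix p assume "p \<in> freqs n"
  have "norm (z ^ fst p) \<le> 1" "norm (w ^ snd p) \<le> 1"
    using assms by (simp_all add: norm_power power_le_one)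
  then show "norm (c (fst p) (snd p) * z ^ fst p * w ^ snd p) \<le> norm (c (fst p) (snd p))"
    unfolding norm_mult by (metis mult.assoc mult_left_le norm_ge_zero mult_le_one)
qed

lemma normBidisk_le_coeff_sum: "normBidisk n c \<le> (\<Sum>p\<in>freqs n. norm (c (fst p) (snd p)))"
  unfolding normBidisk_def by (rule cSUP_least) (auto intro: norm_poly2_bidisk_le)

lemma admissible_normBidisk_le:
  assumes a: "0 < \<alpha>" "\<alpha> < 1" and d0: "0 < \<delta>" "\<delta> \<le> 1" and sep: "row_separated \<alpha> n \<delta>"
    and cK: "normK \<alpha> n c \<le> 1"
  shows "normBidisk n c
    \<le> real (card (freqs n)) ^ 2 * fact (card (freqs n) - 1) * exp (real n) / sep_bound \<delta> n"
proof -
  define I where "I = freqs n"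
  define d where "d p = c (fst p) (snd p)" for p
  define l where "l = freq \<alpha>"
  define T where "T = real (card I) * fact (card I - 1) * exp (real n)"
  have lR: "\<forall>p\<in>I. norm (l p) \<le> real n" using norm_freq[OF a] by (simp add: I_def l_def)
  have coeffs: "norm (\<Sum>p\<in>I. d p * l p ^ t / fact t) \<le> 1" for t
  proof (rule exp_sum_coeff_bound)
    fix \<zeta> :: complex assume "norm \<zeta> = 1"
    then show "norm (\<Sum>p\<in>I. d p * exp (l p * \<zeta>)) \<le> 1"
      using norm_le_normK[OF a, of \<zeta> n c] cK unfolding poly2_exp_sum I_def d_def l_def by simp
  qed
  have sb: "sep_bound \<delta> n > 0" by (rule sep_bound_pos[OF d0(1)])
  have coeff_le: "norm (d p0) \<le> T / sep_bound \<delta> n" if p0: "p0 \<in> I" for p0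
  proof -
    have "norm (d p0) * sep_bound \<delta> n \<le> norm (d p0) * (\<Prod>q\<in>I-{p0}. norm (l p0 - l q))"
      using freq_dist_prod_lower[OF d0 sep p0[unfolded I_def]]
      by (intro mult_left_mono) (auto simp: I_def l_def)
    also have "\<dots> = norm (d p0 * (\<Prod>q\<in>I-{p0}. l p0 - l q))"
      by (simp add: norm_mult prod_norm)
    also have "\<dots> \<le> T"
      unfolding T_def by (rule exp_sum_isolate_coeff[OF _ p0 lR _ coeffs]) (simp_all add: I_def)
    finally show ?thesis using sb by (simp add: field_simps)
  qed
  have "normBidisk n c \<le> (\<Sum>p\<in>I. norm (d p))"
    using normBidisk_le_coeff_sum by (simp add: I_def d_def)
  also have "\<dots> \<le> (\<Sum>p\<in>I. T / sep_bound \<delta> n)" by (rule sum_mono) (rule coeff_le)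
  also have "\<dots> = real (card (freqs n)) ^ 2 * fact (card (freqs n) - 1) * exp (real n) / sep_bound \<delta> n"
    by (simp add: T_def I_def power2_eq_square)
  finally show ?thesis .
qed

lemma poly2_zero: "poly2 n c 0 0 = c 0 0"
proof -
  have "c (fst p) (snd p) * 0 ^ fst p * 0 ^ snd p = (if p = (0, 0) then c 0 0 else 0)"
    for p :: "nat \<times> nat"
    by (cases p) auto
  then show ?thesis by (simp add: poly2_freqs mem_freqs)
qed

lemma normBidisk_ge_const_coeff: "normBidisk n c \<ge> norm (c 0 0)"
proof -
  have "norm (poly2 n c (fst (0::complex, 0::complex)) (snd (0::complex, 0::complex)))
      \<le> normBidisk n c"
    unfolding normBidisk_def
    by (rule cSUP_upper) (auto intro!: bdd_aboveI2 norm_poly2_bidisk_le)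
  then show ?thesis by (simp add: poly2_zero)
qed

text \<open>The main lower estimate: with d_p = k / prod_(q ~= p) (freq p - freq q) and
  k = (T-1)! / e^n the Taylor coefficients of the exponential sum are k times divided
  differences of powers, so the polynomial is admissible, and its constant coefficient is
  at least k / n^(T-1).\<close>
lemma admissible_large_constant:
  assumes a: "0 < \<alpha>" "\<alpha> < 1" and inj: "inj_on (freq \<alpha>) (freqs n)" and n1: "n \<ge> 1"
  obtains c where "normK \<alpha> n c \<le> 1"
    "norm (c 0 0) \<ge> fact (card (freqs n) - 1) / (exp (real n) * real n ^ (card (freqs n) - 1))"
proof -
  define I where "I = freqs n"
  define l where "l = freq \<alpha>"
  define N where "N = card I - 1"
  define k where "k = fact N / exp (real n)"
  define d where "d p = complex_of_real k / (\<Prod>q\<in>I-{p}. l p - l q)" for p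
  define c where "c i j = d (i, j)" for i j
  have fI: "finite I" and I0: "(0,0) \<in> I" by (auto simp: I_def mem_freqs)
  have injI: "inj_on l I" using inj by (simp add: I_def l_def)
  have lR: "\<forall>p\<in>I. norm (l p) \<le> real n" using norm_freq[OF a] by (simp add: I_def l_def)
  have k0: "k \<ge> 0" by (simp add: k_def)
  have coeffs: "norm (\<Sum>p\<in>I. d p * l p ^ s / fact s)
      \<le> (fact N * real (s choose N) * real n ^ (s - N) / fact s) / exp (real n)" for s
  proof -
    have "(\<Sum>p\<in>I. d p * l p ^ s / fact s) = complex_of_real k * divdiff_pow l I s / fact s"
      by (simp add: d_def divdiff_pow_def sum_distrib_left sum_divide_distrib)
    then have "norm (\<Sum>p\<in>I. d p * l p ^ s / fact s) = k * norm (divdiff_pow l I s) / fact s"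
      using k0 by (simp add: norm_mult norm_divide)
    also have "\<dots> \<le> k * (real (s choose N) * real n ^ (s - N)) / fact s"
      using divdiff_pow_bound[OF fI _ injI lR, of s] I0 k0 unfolding N_def
      by (intro divide_right_mono mult_left_mono) auto
    finally show ?thesis by (simp add: k_def field_simps)
  qed
  have "norm (\<Sum>p\<in>I. d p * exp (l p * \<zeta>)) \<le> 1" if "norm \<zeta> \<le> 1" for \<zeta>
  proof (rule exp_sum_bound_by_coeffs[OF fI that coeffs])
    fix K
    have "(\<Sum>s<K. fact N * real (s choose N) * real n ^ (s - N) / fact s / exp (real n))
        = (\<Sum>s<K. fact N * real (s choose N) * real n ^ (s - N) / fact s) / exp (real n)"
      by (rule sum_divide_distrib[symmetric])
    also have "\<dots> \<le> 1"
      using shifted_exp_partial_sum_le[where x = "real n" and K = K and N = N] by simp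
    finally show "(\<Sum>s<K. fact N * real (s choose N) * real n ^ (s - N) / fact s / exp (real n)) \<le> 1" .
  qed
  then have "normK \<alpha> n c \<le> 1"
    unfolding normK_def poly2_exp_sum by (intro cSUP_least) (auto simp: c_def I_def l_def)
  moreover have "norm (c 0 0) \<ge> fact N / (exp (real n) * real n ^ N)"
  proof -
    define P where "P = (\<Prod>q\<in>I-{(0,0)}. l (0,0) - l q)"
    have l0: "l (0, 0) = 0" by (simp add: l_def freq_def)
    have "P \<noteq> 0" unfolding P_def using injI I0 fI by (auto simp: inj_on_def)
    have "norm P = (\<Prod>q\<in>I-{(0,0)}. norm (l (0,0) - l q))" by (simp add: P_def prod_norm)
    also have "\<dots> \<le> real n ^ N"
      using lR l0 I0 fI n1 by (intro prod_le_power) (auto simp: N_def)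
    finally have "k / real n ^ N \<le> k / norm P"
      using \<open>P \<noteq> 0\<close> k0 n1 by (intro divide_left_mono) auto
    also have "k / norm P = norm (c 0 0)" using k0 by (simp add: c_def d_def P_def norm_divide)
    finally show ?thesis by (simp add: k_def)
  qed
  ultimately show ?thesis using that by (simp add: N_def I_def)
qed

lemma poly2_one: "poly2 n (\<lambda>i j. if i = 0 \<and> j = 0 then 1 else 0) z w = 1"
proof -
  have "(if fst p = 0 \<and> snd p = 0 then 1 else 0) * z ^ fst p * w ^ snd p
      = (if p = (0, 0) then 1 else (0::complex))" for p :: "nat \<times> nat"
    by (cases p) auto
  then show ?thesis by (simp add: poly2_freqs mem_freqs)
qed

lemma E_n_bounds:
  assumes "\<And>c. normK \<alpha> n c \<le> 1 \<Longrightarrow> normBidisk n c \<le> U"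
  shows "E_n n \<alpha> \<le> U" "1 \<le> E_n n \<alpha>" "\<And>c. normK \<alpha> n c \<le> 1 \<Longrightarrow> normBidisk n c \<le> E_n n \<alpha>"
proof -
  define one :: "nat \<Rightarrow> nat \<Rightarrow> complex" where "one = (\<lambda>i j. if i = 0 \<and> j = 0 then 1 else 0)"
  have one: "normK \<alpha> n one = 1" "normBidisk n one = 1"
    by (simp_all add: one_def normK_def normBidisk_def poly2_one)
  have bdd: "bdd_above (normBidisk n ` {c. normK \<alpha> n c \<le> 1})"
    using assms by (auto intro!: bdd_aboveI2)
  show "E_n n \<alpha> \<le> U"
    unfolding E_n_def using one(1) assms by (intro cSUP_least) (auto intro!: exI[of _ one])
  show le: "normBidisk n c \<le> E_n n \<alpha>" if "normK \<alpha> n c \<le> 1" for c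
    unfolding E_n_def using that bdd by (intro cSUP_upper) auto
  show "1 \<le> E_n n \<alpha>" using le[of one] one by simp
qed

section \<open>Real-number estimates\<close>

text \<open>Stirling-type bounds for ln L!, from L^L / L! <= e^L and L! <= L^L.\<close>
lemma ln_fact_ge: "ln (fact L) \<ge> real L * ln (real L) - real L"
proof (cases "L = 0")
  case False
  then have L0: "real L > 0" by simp
  have "real L ^ L / fact L \<le> exp (real L)" by (rule pow_div_fact_le_exp) simp
  then have "real L ^ L \<le> exp (real L) * fact L" by (simp add: field_simps)
  then have "ln (real L ^ L) \<le> ln (exp (real L) * fact L)"
    using L0 by (intro ln_mono) auto
  then show ?thesis using L0 by (simp add: ln_mult ln_realpow)
qed simp

lemma ln_fact_ge_of_le:
  assumes "L \<le> n" "n \<ge> 1"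
  shows "ln (fact L) \<ge> real L * ln (real n) - real n"
proof (cases "L = 0")
  case False
  then have L0: "real L > 0" by simp
  have "ln (real n / real L) \<le> real n / real L - 1"
    using L0 assms by (intro ln_le_minus_one) auto
  then have "ln (real n) - ln (real L) \<le> real n / real L - 1" using L0 assms by (simp add: ln_div)
  then have "real L * (ln (real n) - ln (real L)) \<le> real L * (real n / real L - 1)"
    using L0 by (intro mult_left_mono) auto
  then have "real L * ln (real n) - real L * ln (real L) \<le> real n - real L"
    using L0 by (simp add: algebra_simps)
  then show ?thesis using ln_fact_ge[of L] by linarith
qed (use assms in simp)

lemma ln_fact_le:
  assumes "N \<ge> 1"
  shows "ln (fact N) \<le> real N * ln (real N)"
proof -
  have "(fact N :: real) \<le> real N ^ N" using fact_le_power[of N] by (simp add: of_nat_power)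
  then have "ln (fact N) \<le> ln (real N ^ N)" by (intro ln_mono) auto
  then show ?thesis using assms by (simp add: ln_realpow)
qed

lemma sum_rev_real: "(\<Sum>j\<le>n. real (n - j)) = real n * (real n + 1) / 2"
proof (induction n)
  case (Suc n)
  have "(\<Sum>j\<le>Suc n. real (Suc n - j)) = (\<Sum>j\<le>n. real (n - j) + 1)"
    by (simp, rule sum.cong) (auto simp: Suc_diff_le)
  also have "\<dots> = (\<Sum>j\<le>n. real (n - j)) + (real n + 1)" by (simp add: sum.distrib)
  finally show ?case using Suc by (simp add: field_simps)
qed simp

lemma ln_sep_bound_ge:
  assumes "\<delta> > 0" "n \<ge> 1"
  shows "ln (sep_bound \<delta> n)
    \<ge> (real n + 1) * (ln \<delta> - real n) + (ln (real n) - ln 4) * (real n * (real n + 1) / 2)"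
proof -
  have "ln (sep_bound \<delta> n) = (\<Sum>j\<le>n. ln \<delta> + ln (fact (n - j)) - real (n - j) * ln 4)"
    unfolding sep_bound_def using assms
    by (subst ln_prod) (auto intro!: sum.cong simp: ln_mult ln_div ln_realpow)
  also have "\<dots> \<ge> (\<Sum>j\<le>n. ln \<delta> + (real (n - j) * ln (real n) - real n) - real (n - j) * ln 4)"
  proof (rule sum_mono)
    fix j assume "j \<in> {..n}"
    then have "ln (fact (n - j)) \<ge> real (n - j) * ln (real n) - real n"
      using assms by (intro ln_fact_ge_of_le) auto
    then show "ln \<delta> + (real (n - j) * ln (real n) - real n) - real (n - j) * ln 4
        \<le> ln \<delta> + ln (fact (n - j)) - real (n - j) * ln 4" by linarith
  qed
  moreover have "(\<Sum>j\<le>n. ln \<delta> + (real (n - j) * ln (real n) - real n) - real (n - j) * ln 4)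
      = (real n + 1) * (ln \<delta> - real n) + (ln (real n) - ln 4) * (\<Sum>j\<le>n. real (n - j))"
    by (simp add: sum.distrib sum_subtractf sum_distrib_left sum_distrib_right algebra_simps)
  ultimately show ?thesis unfolding sum_rev_real by linarith
qed

text \<open>ln x <= 6 x / K + |ln (K/6)|, used to absorb K x ln x into 6 x^2 + O(x).\<close>
lemma ln_le_linear:
  fixes K x :: real
  assumes "K > 0" "x > 0"
  shows "ln x \<le> 6 * x / K + \<bar>ln (K / 6)\<bar>"
proof -
  have "ln (6 * x / K) \<le> 6 * x / K - 1" using assms by (intro ln_le_minus_one) auto
  moreover have "ln (6 * x / K) = ln x - ln (K / 6)" using assms by (simp add: ln_div ln_mult)
  ultimately show ?thesis by linarith
qed

lemma card_freqs_real: "2 * real (card (freqs n)) = (real n + 1) * (real n + 2)"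
  using card_freqs[of n] by (metis of_nat_add of_nat_mult of_nat_numeral of_nat_1)

lemma card_freqs_minus_one: "2 * real (card (freqs n) - 1) = real n ^ 2 + 3 * real n"
proof -
  have "card (freqs n) \<ge> 1" using card_freqs[of n] by (cases "card (freqs n)") auto
  then show ?thesis using card_freqs_real[of n] by (simp add: of_nat_diff power2_eq_square algebra_simps)
qed

lemma ln_card_freqs_le:
  assumes "n \<ge> 1"
  shows "ln (real (card (freqs n))) \<le> ln 3 + 2 * ln (real n)"
proof -
  have x1: "real n \<ge> 1" using assms by simp
  have "real n \<le> real n * real n" using mult_right_mono[OF x1, of "real n"] by simp
  moreover have "2 * real (card (freqs n)) = real n * real n + 3 * real n + 2"
    using card_freqs_real[of n] by (simp add: algebra_simps)
  ultimately have "real (card (freqs n)) \<le> 3 * (real n * real n)" using x1 by linarith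
  then have "real (card (freqs n)) \<le> 3 * real n ^ 2" by (simp add: power2_eq_square)
  moreover have "card (freqs n) > 0" using card_freqs[of n] by (intro Nat.gr0I) simp
  ultimately have "ln (real (card (freqs n))) \<le> ln (3 * real n ^ 2)" by (intro ln_mono) auto
  also have "\<dots> = ln 3 + 2 * ln (real n)" using x1 by (simp add: ln_mult ln_realpow)
  finally show ?thesis .
qed

lemma ln_fact_card_freqs_le:
  assumes "n \<ge> 1"
  shows "ln (fact (card (freqs n) - 1))
    \<le> real (card (freqs n) - 1) * (ln 2 + 2 * ln (real n))"
proof -
  define N where "N = card (freqs n) - 1"
  have x1: "real n \<ge> 1" using assms by simp
  have N2: "2 * real N = real n ^ 2 + 3 * real n" using card_freqs_minus_one by (simp add: N_def)
  moreover have "real n ^ 2 \<ge> 1" using x1 by simp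
  ultimately have "2 * real N \<ge> 4" using x1 by linarith
  then have N1: "N \<ge> 1" by simp
  have "real n \<le> real n * real n" using mult_right_mono[OF x1, of "real n"] by simp
  then have "real N \<le> 2 * (real n * real n)" using N2 by (simp add: power2_eq_square)
  then have "real N \<le> 2 * real n ^ 2" by (simp add: power2_eq_square)
  then have "ln (real N) \<le> ln (2 * real n ^ 2)" using N1 by (intro ln_mono) auto
  also have "\<dots> = ln 2 + 2 * ln (real n)" using x1 by (simp add: ln_mult ln_realpow)
  finally have "real N * ln (real N) \<le> real N * (ln 2 + 2 * ln (real n))"
    by (intro mult_left_mono) auto
  then show ?thesis using ln_fact_le[OF N1] by (simp add: N_def)
qed

text \<open>The dominant terms are 2 N ln n from (T-1)! (with N = T - 1,
  2 N = n^2 + 3 n) and -(n^2/2) ln n from the separation bound; the cross terms of size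
  n ln n are absorbed into 6 n^2 + O(n) by ln_le_linear.\<close>
lemma upper_log_estimate:
  fixes e \<mu> :: real
  assumes n1: "n \<ge> 1" and e: "0 < e" "e \<le> 1" and mu: "\<mu> \<ge> 2"
  defines "T \<equiv> card (freqs n)" and "K \<equiv> 2 * \<mu> + 9 / 2"
  shows "ln (real T ^ 2 * fact (T - 1) * exp (real n) / sep_bound (e * real n powr (1 - \<mu>)) n)
     \<le> real n ^ 2 * ln (real n) / 2 + 9 * real n ^ 2 + (7 + K * \<bar>ln (K / 6)\<bar> + 2 * \<bar>ln e\<bar>) * real n"
proof -
  define x where "x = real n"
  define Lg where "Lg = ln x"
  define \<delta> where "\<delta> = e * real n powr (1 - \<mu>)"
  define N where "N = T - 1"
  have x1: "x \<ge> 1" using n1 by (simp add: x_def)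
  have Lg0: "Lg \<ge> 0" using x1 by (simp add: Lg_def)
  have N2: "2 * real N = x * x + 3 * x"
    using card_freqs_minus_one[of n] by (simp add: N_def T_def x_def power2_eq_square)
  have T1: "T \<ge> 1" using card_freqs[of n] by (cases T) (auto simp: T_def)
  have d0: "\<delta> > 0" using e n1 by (simp add: \<delta>_def)
  have ln_delta: "ln \<delta> = ln e + (1 - \<mu>) * Lg"
    using e n1 by (simp add: \<delta>_def ln_mult ln_powr Lg_def x_def)
  have "ln (real T ^ 2 * fact N * exp (real n) / sep_bound \<delta> n)
      = 2 * ln (real T) + ln (fact N) + x - ln (sep_bound \<delta> n)"
  proof -
    have "sep_bound \<delta> n > 0" by (rule sep_bound_pos[OF d0])
    then show ?thesis using T1 by (simp add: ln_div ln_mult ln_realpow x_def)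
  qed
  also have "\<dots> \<le> 2 * (ln 3 + 2 * Lg) + real N * (ln 2 + 2 * Lg) + x
      - ((x + 1) * (ln e + (1 - \<mu>) * Lg - x) + (Lg - ln 4) * (x * (x + 1) / 2))"
    using ln_card_freqs_le[OF n1] ln_fact_card_freqs_le[OF n1] ln_sep_bound_ge[OF d0 n1]
    unfolding ln_delta by (simp add: N_def T_def x_def Lg_def)
  also have "\<dots> = x ^ 2 * Lg / 2 + Lg * (5 * x / 2 + 4 + (x + 1) * (\<mu> - 1))
        + (2 * ln 3 + real N * ln 2 + x + x * (x + 1) + ln 4 * (x * (x + 1) / 2)) - (x + 1) * ln e"
    using N2 by (simp add: algebra_simps power2_eq_square field_simps)
  also have "\<dots> \<le> x ^ 2 * Lg / 2 + 9 * x ^ 2 + (7 + K * \<bar>ln (K / 6)\<bar> + 2 * \<bar>ln e\<bar>) * x"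
  proof -
    have Kp: "K > 0" using mu by (simp add: K_def)
    have "5 * x / 2 + 4 + (x + 1) * (\<mu> - 1) \<le> K * x"
      using x1 mu mult_right_mono[of "x + 1" "2 * x" "\<mu> - 1"] by (simp add: K_def algebra_simps)
    then have "Lg * (5 * x / 2 + 4 + (x + 1) * (\<mu> - 1)) \<le> Lg * (K * x)"
      by (rule mult_left_mono[OF _ Lg0])
    then have cross: "Lg * (5 * x / 2 + 4 + (x + 1) * (\<mu> - 1)) \<le> K * x * Lg"
      by (simp add: mult_ac)
    have "Lg \<le> 6 * x / K + \<bar>ln (K / 6)\<bar>" unfolding Lg_def using Kp x1 by (intro ln_le_linear) auto
    then have "K * x * Lg \<le> K * x * (6 * x / K + \<bar>ln (K / 6)\<bar>)"
      using Kp x1 by (intro mult_left_mono) auto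
    also have "\<dots> = 6 * x ^ 2 + K * \<bar>ln (K / 6)\<bar> * x" using Kp by (simp add: field_simps power2_eq_square)
    finally have absorb: "K * x * Lg \<le> 6 * x ^ 2 + K * \<bar>ln (K / 6)\<bar> * x" .
    have l2: "ln (2::real) \<le> 25/36" by (rule ln2_le_25_over_36)
    have l4: "ln (4::real) = 2 * ln 2" using ln_realpow[of 2 2] by simp
    have "2 * ln (3::real) \<le> 100/36"
      using l2 l4 ln_le_cancel_iff[of 3 4] by simp
    moreover have "real N * ln 2 \<le> real N * (25/36)" using l2 by (intro mult_left_mono) auto
    moreover have "ln 4 * (x * (x + 1) / 2) \<le> (50/36) * (x * (x + 1) / 2)"
      using l4 l2 x1 by (intro mult_right_mono) auto
    moreover have "x \<le> x * x" using mult_right_mono[OF x1, of x] x1 by simp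
    moreover have "x * (x + 1) = x * x + x" by (simp add: algebra_simps)
    ultimately have "2 * ln 3 + real N * ln 2 + x + x * (x + 1) + ln 4 * (x * (x + 1) / 2)
        \<le> 3 * (x * x) + 7 * x"
      using N2 x1 by linarith
    then have constants: "2 * ln 3 + real N * ln 2 + x + x * (x + 1) + ln 4 * (x * (x + 1) / 2)
        \<le> 3 * x ^ 2 + 7 * x"
      by (simp add: power2_eq_square)
    have "- (x + 1) * ln e \<le> 2 * \<bar>ln e\<bar> * x"
      using e x1 mult_right_mono[of "x + 1" "2 * x" "\<bar>ln e\<bar>"] by (simp add: algebra_simps)
    then show ?thesis using cross absorb constants by (simp add: algebra_simps)
  qed
  finally show ?thesis by (simp add: x_def Lg_def N_def \<delta>_def)
qed

lemma exp2_ge7: "exp (2::real) \<ge> 7"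
proof -
  have "\<bar>exp (1::real) - 5837465777 / 2147483648\<bar> \<le> 1 / 4294967296" using e_approx_32 by simp
  then have "exp (1::real) \<ge> 27/10" by linarith
  then have "exp (1::real) * exp 1 \<ge> (27/10) * (27/10)" by (intro mult_mono) auto
  then show ?thesis by (simp flip: exp_add)
qed

text \<open>The logarithm of the lower bound (T-1)! / (e^n n^(T-1)) is at least (n^2 ln n)/2 - n^2
  once ln n > 2 (for smaller n the claimed lower bound is negative).\<close>
lemma lower_log_estimate:
  assumes n1: "n \<ge> 1" and big: "ln (real n) > 2"
  defines "T \<equiv> card (freqs n)"
  shows "ln (fact (T - 1) / (exp (real n) * real n ^ (T - 1))) \<ge> real n ^ 2 * ln (real n) / 2 - real n ^ 2"
proof -
  define x where "x = real n"
  define Lg where "Lg = ln x"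
  define N where "N = T - 1"
  have x1: "x \<ge> 1" using n1 by (simp add: x_def)
  have N2: "2 * real N = x * x + 3 * x"
    using card_freqs_minus_one[of n] by (simp add: N_def T_def x_def power2_eq_square)
  have Nx: "real N \<ge> x * x / 2" using N2 x1 by linarith
  have "x \<le> x * x" using mult_right_mono[OF x1, of x] x1 by simp
  then have "real N > 0" using Nx x1 by linarith
  have x7: "x \<ge> 7"
  proof -
    have "exp (2::real) < exp Lg" using big by (simp add: Lg_def x_def)
    also have "exp Lg = x" using x1 by (simp add: Lg_def)
    finally show ?thesis using exp2_ge7 by linarith
  qed
  have l2: "ln (2::real) \<le> 25/36" by (rule ln2_le_25_over_36)
  have "ln (x * x / 2) \<le> ln (real N)" using Nx x1 by (intro ln_mono) auto
  moreover have "ln (x * x / 2) = 2 * Lg - ln 2" using x1 by (simp add: ln_div ln_mult Lg_def)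
  ultimately have "real N * (2 * Lg - ln 2) \<le> real N * ln (real N)"
    using \<open>real N > 0\<close> by (intro mult_left_mono) auto
  then have lf: "ln (fact N) \<ge> real N * (2 * Lg - ln 2) - real N"
    using ln_fact_ge[of N] by linarith
  have "Lg - ln 2 - 1 \<ge> 0" using big l2 by (simp add: Lg_def x_def)
  then have A1: "real N * (Lg - ln 2 - 1) \<ge> (x * x / 2) * (Lg - ln 2 - 1)"
    using Nx by (intro mult_right_mono) auto
  have "x * (1 - ln 2) \<ge> 7 * (11/36)" using x7 l2 by (intro mult_mono) auto
  then have "x * (x * (1 - ln 2)) \<ge> x * 2" using x1 by (intro mult_left_mono) auto
  then have A2: "(x * x / 2) * (1 - ln 2) \<ge> x" by (simp add: algebra_simps)
  have linear_combination: "\<And>u p q X x F :: real. u * (p - q - 1) \<ge> (X / 2) * (p - q - 1) \<Longrightarrow>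
      (X / 2) * (1 - q) \<ge> x \<Longrightarrow> F \<ge> u * (2 * p - q) - u \<Longrightarrow> F - x - u * p \<ge> X * p / 2 - X"
    unfolding right_diff_distrib left_diff_distrib by linarith
  have "ln (fact N) - x - real N * Lg \<ge> x * x * Lg / 2 - x * x"
    by (rule linear_combination[OF A1 A2 lf])
  moreover have "ln (fact N / (exp (real n) * real n ^ N)) = ln (fact N) - x - real N * Lg"
    using x1 by (simp add: ln_div ln_mult ln_realpow x_def Lg_def)
  ultimately show ?thesis by (simp add: N_def x_def Lg_def power2_eq_square)
qed

text \<open>Lower bound for e_n: the trivial bound e_n >= 0 suffices when ln n <= 2, and otherwise
  the admissible polynomial with large constant coefficient is used.\<close>
lemma e_n_lower:
  assumes a: "0 < \<alpha>" "\<alpha> < 1" and n1: "n \<ge> 1" and inj: "inj_on (freq \<alpha>) (freqs n)"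
    and E1: "1 \<le> E_n n \<alpha>" and E_ge: "\<And>c. normK \<alpha> n c \<le> 1 \<Longrightarrow> normBidisk n c \<le> E_n n \<alpha>"
  shows "real n ^ 2 * ln (real n) / 2 - real n ^ 2 \<le> e_n n \<alpha>"
proof (cases "ln (real n) > 2")
  case False
  then have "real n ^ 2 * ln (real n) / 2 - real n ^ 2 \<le> real n ^ 2 * 2 / 2 - real n ^ 2"
    by (intro diff_right_mono divide_right_mono mult_left_mono) auto
  also have "\<dots> \<le> e_n n \<alpha>" unfolding e_n_def using E1 by simp
  finally show ?thesis .
next
  case True
  define T where "T = card (freqs n)"
  define V where "V = fact (T - 1) / (exp (real n) * real n ^ (T - 1))"
  obtain c where "normK \<alpha> n c \<le> 1" "V \<le> norm (c 0 0)"
    using admissible_large_constant[OF a inj n1] unfolding V_def T_def by blast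
  then have "V \<le> E_n n \<alpha>"
    using normBidisk_ge_const_coeff[where n = n and c = c] E_ge[of c] by linarith
  moreover have "V > 0" using n1 by (simp add: V_def)
  ultimately have "ln V \<le> e_n n \<alpha>" unfolding e_n_def by (intro ln_mono) auto
  then show ?thesis using lower_log_estimate[OF n1 True] by (simp add: V_def T_def)
qed

theorem corollary2:
  fixes \<alpha> \<mu> :: real
  assumes "0 < \<alpha>" "\<alpha> < 1" "\<mu> \<ge> 2" "diophantine_of_order \<alpha> \<mu>"
  shows "\<exists>C>0. \<forall>n::nat. n \<ge> 1 \<longrightarrow>
           real n ^ 2 * ln (real n) / 2 - real n ^ 2 \<le> e_n n \<alpha> \<and>
           e_n n \<alpha> \<le> real n ^ 2 * ln (real n) / 2 + 9 * real n ^ 2 + C * real n"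
proof -
  obtain e where e: "0 < e" "e \<le> 1"
    and dio: "\<And>n p q. 1 \<le> \<bar>q\<bar> \<Longrightarrow> \<bar>q\<bar> \<le> int n \<Longrightarrow>
        \<bar>real_of_int p + real_of_int q * \<alpha>\<bar> \<ge> e * real n powr (1 - \<mu>)"
    using diophantine_linear_form_bound[OF assms(4)] assms(3) by auto
  define K where "K = 2 * \<mu> + 9 / 2"
  define C where "C = 7 + K * \<bar>ln (K / 6)\<bar> + 2 * \<bar>ln e\<bar>"
  have "C > 0" using assms(3) by (simp add: C_def K_def add_pos_nonneg)
  moreover have "real n ^ 2 * ln (real n) / 2 - real n ^ 2 \<le> e_n n \<alpha> \<and>
      e_n n \<alpha> \<le> real n ^ 2 * ln (real n) / 2 + 9 * real n ^ 2 + C * real n" if n1: "n \<ge> 1" for n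
  proof -
    define \<delta> where "\<delta> = e * real n powr (1 - \<mu>)"
    have \<delta>: "0 < \<delta>" "\<delta> \<le> 1"
      using e n1 assms(3) powr_mono[of "1 - \<mu>" 0 "real n"] unfolding \<delta>_def
      by (auto intro: mult_le_one)
    have sep: "row_separated \<alpha> n \<delta>" unfolding row_separated_def \<delta>_def using dio by blast
    define U where "U = real (card (freqs n)) ^ 2 * fact (card (freqs n) - 1) * exp (real n)
        / sep_bound \<delta> n"
    have adm: "\<And>c. normK \<alpha> n c \<le> 1 \<Longrightarrow> normBidisk n c \<le> U"
      unfolding U_def by (rule admissible_normBidisk_le[OF assms(1,2) \<delta> sep])
    note E = E_n_bounds[of \<alpha> n U, OF adm]
    have "e_n n \<alpha> \<le> ln U" unfolding e_n_def using E(1,2) by (intro ln_mono) auto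
    also have "\<dots> \<le> real n ^ 2 * ln (real n) / 2 + 9 * real n ^ 2 + C * real n"
      using upper_log_estimate[OF n1 e assms(3)] by (simp add: U_def \<delta>_def C_def K_def)
    finally show ?thesis
      using e_n_lower[OF assms(1,2) n1 inj_on_freq[OF sep \<delta>(1)] E(2,3)] by blast
  qed
  ultimately show ?thesis by blast
qed

end
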